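(* Let $R$ be a Noetherian ring and $I\subset R$ an ideal. If $I^n\cap(0:I)=0$ for some $n\in\mathbb N$, then $I^n(0:I^\infty)=0$.
   Context: $0:I^\infty=\bigcup_{t\ge1}(0:I^t)$. *)

theory Defs
  imports "HOL-Algebra.Ideal_Product" "HOL-Algebra.Ring_Divisibility"
begin

primrec ideal_pow :: "('a, 'b) ring_scheme \<Rightarrow> 'a set \<Rightarrow> nat \<Rightarrow> 'a set" where
  "ideal_pow R I 0 = carrier R"
| "ideal_pow R I (Suc n) = ideal_prod R I (ideal_pow R I n)"

definition ann :: "('a, 'b) ring_scheme \<Rightarrow> 'a set \<Rightarrow> 'a set" where
  "ann R J = {x \<in> carrier R. \<forall>j \<in> J. x \<otimes>\<^bsub>R\<^esub> j = \<zero>\<^bsub>R\<^esub>}"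

definition ann_inf :: "('a, 'b) ring_scheme \<Rightarrow> 'a set \<Rightarrow> 'a set" where
  "ann_inf R I = (\<Union>t\<in>{1..}. ann R (ideal_pow R I t))"

end

theory Submission
  imports Defs
begin

text \<open>For \<open>x \<in> (0 : I\<^sup>t\<^sup>+\<^sup>1)\<close> and \<open>b \<in> I\<close> we have \<open>x b \<in> (0 : I\<^sup>t)\<close>, so by induction on
  \<open>t\<close> every \<open>a \<in> I\<^sup>n\<close> satisfies \<open>a x b = 0\<close>. Hence \<open>a x \<in> I\<^sup>n \<inter> (0 : I) = 0\<close>, i.e.
  \<open>(0 : I\<^sup>t) \<subseteq> (0 : I\<^sup>n)\<close> for every \<open>t\<close>, and therefore \<open>(0 : I\<^sup>\<infinity>) \<subseteq> (0 : I\<^sup>n)\<close>.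
  This elementwise argument does not need the Noetherian hypothesis.\<close>

lemma (in ring) ideal_pow_is_ideal:
  assumes "ideal I R"
  shows "ideal (ideal_pow R I t) R"
  by (induction t) (simp_all add: oneideal ideal_prod_is_ideal assms)

lemma (in ring) ann_carrier: "ann R (carrier R) = {\<zero>}"
  unfolding ann_def by (auto dest: bspec[of _ _ \<one>])

lemma (in ring) ideal_prod_eq_zero:
  assumes "\<zero> \<in> I" "\<zero> \<in> J" "\<And>i j. i \<in> I \<Longrightarrow> j \<in> J \<Longrightarrow> i \<otimes> j = \<zero>"
  shows "ideal_prod R I J = {\<zero>}"
proof
  show "ideal_prod R I J \<subseteq> {\<zero>}"
  proof
    fix s assume "s \<in> ideal_prod R I J"
    then show "s \<in> {\<zero>}" by (induction s rule: ideal_prod.induct) (simp_all add: assms(3))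
  qed
  show "{\<zero>} \<subseteq> ideal_prod R I J"
    using ideal_prod.prod[OF assms(1,2), of R] by simp
qed

lemma (in ring) ann_ideal_pow_Suc_mult:
  assumes "ideal I R" "x \<in> ann R (ideal_pow R I (Suc t))" "b \<in> I"
  shows "x \<otimes> b \<in> ann R (ideal_pow R I t)"
  unfolding ann_def
proof (intro CollectI conjI ballI)
  have x: "x \<in> carrier R" using assms(2) unfolding ann_def by blast
  have b: "b \<in> carrier R" by (rule ideal.Icarr[OF assms(1,3)])
  show "x \<otimes> b \<in> carrier R" using x b by simp
  fix c assume c: "c \<in> ideal_pow R I t"
  then have "c \<in> carrier R" by (rule ideal.Icarr[OF ideal_pow_is_ideal[OF assms(1)]])
  then have "x \<otimes> b \<otimes> c = x \<otimes> (b \<otimes> c)" using m_assoc x b by blast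
  also have "\<dots> = \<zero>"
    using assms(2) ideal_prod.prod[OF assms(3) c] unfolding ann_def ideal_pow.simps by blast
  finally show "x \<otimes> b \<otimes> c = \<zero>" .
qed

lemma (in cring) ann_ideal_pow_subset:
  assumes I: "ideal I R" and trivial: "ideal_pow R I n \<inter> ann R I = {\<zero>}"
  shows "ann R (ideal_pow R I t) \<subseteq> ann R (ideal_pow R I n)"
proof (induction t)
  case 0
  have "ideal_pow R I n \<subseteq> carrier R"
    using ideal.axioms(1)[OF ideal_pow_is_ideal[OF I]] by (rule additive_subgroup.a_subset)
  then show ?case using ann_carrier by (auto simp: ann_def)
next
  case (Suc t)
  show ?case
  proof
    fix x assume x_ann: "x \<in> ann R (ideal_pow R I (Suc t))"
    then have x: "x \<in> carrier R" unfolding ann_def by blast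
    have "a \<otimes> x = \<zero>" if a: "a \<in> ideal_pow R I n" for a
    proof -
      have a_carr: "a \<in> carrier R" by (rule ideal.Icarr[OF ideal_pow_is_ideal[OF I] a])
      have "a \<otimes> x \<in> ann R I"
        unfolding ann_def
      proof (intro CollectI conjI ballI)
        show "a \<otimes> x \<in> carrier R" using a_carr x by simp
        fix b assume b: "b \<in> I"
        have "x \<otimes> b \<in> ann R (ideal_pow R I n)"
          using Suc.IH ann_ideal_pow_Suc_mult[OF I x_ann b] by blast
        then have "x \<otimes> b \<otimes> a = \<zero>" using a unfolding ann_def by blast
        moreover have "b \<in> carrier R" by (rule ideal.Icarr[OF I b])
        ultimately show "a \<otimes> x \<otimes> b = \<zero>" using a_carr x by (simp add: m_ac)
      qed
      moreover have "a \<otimes> x \<in> ideal_pow R I n"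
        by (rule ideal.I_r_closed[OF ideal_pow_is_ideal[OF I] a x])
      ultimately show ?thesis using trivial by blast
    qed
    then show "x \<in> ann R (ideal_pow R I n)"
      using x ideal.Icarr[OF ideal_pow_is_ideal[OF I]] unfolding ann_def by (auto simp: m_comm)
  qed
qed

lemma (in cring) ann_inf_subset_ann_ideal_pow:
  assumes "ideal I R" and "ideal_pow R I n \<inter> ann R I = {\<zero>}"
  shows "ann_inf R I \<subseteq> ann R (ideal_pow R I n)"
  unfolding ann_inf_def using ann_ideal_pow_subset[OF assms] by blast

lemma (in ring) zero_in_ann_inf:
  assumes "ideal I R"
  shows "\<zero> \<in> ann_inf R I"
proof -
  have "\<zero> \<in> ann R (ideal_pow R I 1)"
    unfolding ann_def using ideal.Icarr[OF ideal_pow_is_ideal[OF assms]]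
    by (auto simp del: ideal_pow.simps)
  then show ?thesis unfolding ann_inf_def by blast
qed

theorem lemma3p6:
  fixes R (structure) and I :: "'a set" and n :: nat
  assumes "cring R" and "noetherian_ring R" and "ideal I R"
    and "ideal_pow R I n \<inter> ann R I = {\<zero>}"
  shows "ideal_prod R (ideal_pow R I n) (ann_inf R I) = {\<zero>}"
proof (rule ring.ideal_prod_eq_zero)
  interpret cring R by fact
  show "ring R" ..
  have In: "ideal (ideal_pow R I n) R" using ideal_pow_is_ideal[OF assms(3)] .
  show "\<zero> \<in> ideal_pow R I n" by (rule additive_subgroup.zero_closed[OF ideal.axioms(1)[OF In]])
  show "\<zero> \<in> ann_inf R I" using zero_in_ann_inf[OF assms(3)] .
  fix a x assume a: "a \<in> ideal_pow R I n" and x: "x \<in> ann_inf R I"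
  then have "x \<otimes> a = \<zero>"
    using ann_inf_subset_ann_ideal_pow[OF assms(3,4)] unfolding ann_def by blast
  moreover have "x \<in> carrier R"
    using x ann_inf_subset_ann_ideal_pow[OF assms(3,4)] unfolding ann_def by blast
  ultimately show "a \<otimes> x = \<zero>" using ideal.Icarr[OF In a] by (simp add: m_comm)
qed

end
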